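(* Let $A=(A^m(x_1,\dots,x_m))_{m\ge0}$ be a mould with $A^0=0$ such that $A^m(x_1,\dots,x_m)=A^{m-1}(x_1,\dots,x_{m-1})-A^{m-1}(x_2,\dots,x_m)$ for all $m\ge2$. Then $A$ is alternal.
   Context: A mould is a family $A=(A^m(x_1,\dots,x_m))_{m\ge0}$ with $A^m\in\mathbb{Q}((x_1,\dots,x_m))$ (fraction field of $\mathbb{Q}[[x_1,\dots,x_m]]$), extended linearly to formal linear combinations of words. The shuffle product of words is defined by $\emptyset\,\text{ш}\,\omega=\omega\,\text{ш}\,\emptyset=\omega$ and $a\omega\,\text{ш}\,b\eta=a(\omega\,\text{ш}\,b\eta)+b(a\omega\,\text{ш}\,\eta)$. A mould $A$ with $A^0=0$ is alternal if $A^{p+q}\bigl((x_1,\dots,x_p)\,\text{ш}\,(x_{p+1},\dots,x_{p+q})\bigr)=0$ for all $p,q\ge1$. *)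

theory Defs
  imports Main
begin

(* Shuffle product of two words, as a formal sum of words (a list = multiset of words,
   with multiplicities), following the recursion of the paper:
   [] sh w = w sh [] = w,  a w sh b v = a (w sh b v) + b (a w sh v). *)
fun shuffle :: "'a list \<Rightarrow> 'a list \<Rightarrow> 'a list list" where
  "shuffle [] ys = [ys]"
| "shuffle (x # xs) [] = [x # xs]"
| "shuffle (x # xs) (y # ys) =
     map ((#) x) (shuffle xs (y # ys)) @ map ((#) y) (shuffle (x # xs) ys)"

(* A mould is modelled by its values on words of (distinct) variables:
   A w stands for A^m(w_1,...,w_m), m = length w, i.e. A^m with the variables
   x_1..x_m substituted by w_1..w_m. *)
definition mould_lin :: "('v list \<Rightarrow> 'r::ab_group_add) \<Rightarrow> 'v list list \<Rightarrow> 'r" where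
  "mould_lin A ws = sum_list (map A ws)"

definition alternal :: "('v list \<Rightarrow> 'r::ab_group_add) \<Rightarrow> bool" where
  "alternal A \<longleftrightarrow> A [] = 0 \<and>
     (\<forall>u v. distinct (u @ v) \<and> u \<noteq> [] \<and> v \<noteq> [] \<longrightarrow> mould_lin A (shuffle u v) = 0)"

end

(* Apply the recursion A w = A (butlast w) - A (tl w) to every word of u sh v.  Deleting the
   first letter of each word of u sh v gives (tl u sh v) + (u sh tl v), and deleting the last
   letter gives (butlast u sh v) + (u sh butlast v), up to order.  Hence the shuffle sum S(u,v)
   of A equals S(butlast u, v) + S(u, butlast v) - S(tl u, v) - S(u, tl v).  By induction on
   |u| + |v| each of these terms vanishes unless u (or v) is a single letter, in which case
   butlast u = tl u = [] and the corresponding terms cancel. *)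

theory Submission
  imports Defs "HOL-Library.Multiset"
begin

lemma shuffle_Nil2 [simp]: "shuffle u [] = [u]"
  by (cases u) auto

lemma mset_shuffle_word: "s \<in> set (shuffle u v) \<Longrightarrow> mset s = mset (u @ v)"
  by (induction u v arbitrary: s rule: shuffle.induct) auto

lemma length_shuffle_word: "s \<in> set (shuffle u v) \<Longrightarrow> length s = length u + length v"
  using mset_eq_length[OF mset_shuffle_word] by simp

lemma distinct_shuffle_word_iff: "s \<in> set (shuffle u v) \<Longrightarrow> distinct s \<longleftrightarrow> distinct (u @ v)"
  by (rule mset_eq_imp_distinct_iff[OF mset_shuffle_word])

lemma mset_shuffle_commute: "mset (shuffle u v) = mset (shuffle v u)"
  by (induction u v rule: shuffle.induct) auto

lemma map_tl_shuffle:
  "u \<noteq> [] \<Longrightarrow> v \<noteq> [] \<Longrightarrow> map tl (shuffle u v) = shuffle (tl u) v @ shuffle u (tl v)"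
  by (cases u; cases v) (simp_all add: comp_def)

lemma map_butlast_map_Cons_shuffle:
  assumes "u @ v \<noteq> []"
  shows "map butlast (map ((#) x) (shuffle u v)) = map ((#) x) (map butlast (shuffle u v))"
proof -
  have "s \<noteq> []" if "s \<in> set (shuffle u v)" for s
    using length_shuffle_word[OF that] assms by auto
  then show ?thesis by simp
qed

lemma mset_map_butlast_shuffle:
  "u \<noteq> [] \<Longrightarrow> v \<noteq> [] \<Longrightarrow>
   mset (map butlast (shuffle u v)) = mset (shuffle (butlast u) v @ shuffle u (butlast v))"
proof (induction u v rule: shuffle.induct)
  case (3 x xs y ys)
  have "map butlast (shuffle (x # xs) (y # ys)) =
    map ((#) x) (map butlast (shuffle xs (y # ys))) @ map ((#) y) (map butlast (shuffle (x # xs) ys))"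
    by (simp only: shuffle.simps map_append map_butlast_map_Cons_shuffle
        append_is_Nil_conv list.distinct simp_thms)
  \<comment> \<open>keep the inner \<open>map butlast\<close> unexpanded so that the induction hypotheses apply\<close>
  then show ?case
    using 3 by (cases "xs = []"; cases "ys = []")
      (simp_all add: mset_map[of "(#) x"] mset_map[of "(#) y"] del: mset_map map_map)
qed simp_all

lemma mould_lin_mset_cong: "mset ws = mset ws' \<Longrightarrow> mould_lin A ws = mould_lin A ws'"
  unfolding mould_lin_def by (metis mset_map sum_mset_sum_list)

lemma mould_lin_cong: "(\<And>w. w \<in> set ws \<Longrightarrow> A w = B w) \<Longrightarrow> mould_lin A ws = mould_lin B ws"
  unfolding mould_lin_def by (metis map_cong)

lemma mould_lin_append: "mould_lin A (ws @ ws') = mould_lin A ws + mould_lin A ws'"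
  by (simp add: mould_lin_def)

lemma mould_lin_map: "mould_lin A (map f ws) = mould_lin (\<lambda>w. A (f w)) ws"
  by (simp add: mould_lin_def comp_def)

lemma mould_lin_diff: "mould_lin (\<lambda>w. A w - B w) ws = mould_lin A ws - mould_lin B ws"
  by (simp add: mould_lin_def sum_list_subtractf)

lemma mould_lin_shuffle_commute: "mould_lin A (shuffle u v) = mould_lin A (shuffle v u)"
  by (rule mould_lin_mset_cong) (rule mset_shuffle_commute)

lemma mould_lin_tl_shuffle:
  "u \<noteq> [] \<Longrightarrow> v \<noteq> [] \<Longrightarrow>
   mould_lin (\<lambda>w. A (tl w)) (shuffle u v) = mould_lin A (shuffle (tl u) v) + mould_lin A (shuffle u (tl v))"
  by (simp add: mould_lin_map [symmetric] map_tl_shuffle mould_lin_append)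

lemma mould_lin_butlast_shuffle:
  "u \<noteq> [] \<Longrightarrow> v \<noteq> [] \<Longrightarrow>
   mould_lin (\<lambda>w. A (butlast w)) (shuffle u v) =
   mould_lin A (shuffle (butlast u) v) + mould_lin A (shuffle u (butlast v))"
  by (simp add: mould_lin_map [symmetric] mould_lin_append [symmetric]
      mould_lin_mset_cong[OF mset_map_butlast_shuffle] del: mset_map)

lemma mould_lin_shuffle_eq_0:
  fixes A :: "'v list \<Rightarrow> 'r::ab_group_add"
  assumes rec: "\<And>w. distinct w \<Longrightarrow> length w \<ge> 2 \<Longrightarrow> A w = A (butlast w) - A (tl w)"
  shows "distinct (u @ v) \<Longrightarrow> u \<noteq> [] \<Longrightarrow> v \<noteq> [] \<Longrightarrow> mould_lin A (shuffle u v) = 0"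
proof (induction "length u + length v" arbitrary: u v rule: less_induct)
  case less
  have butlast_tl_left: "mould_lin A (shuffle (butlast p) q) = mould_lin A (shuffle (tl p) q)"
    if "distinct (p @ q)" "p \<noteq> []" "q \<noteq> []" "length p + length q = length u + length v" for p q
  proof (cases "tl p = []")
    case True
    with \<open>p \<noteq> []\<close> obtain x where "p = [x]" by (cases p) auto
    then show ?thesis by simp
  next
    case False
    then have "butlast p \<noteq> []" by (cases p) auto
    moreover have "distinct (butlast p @ q)" using that(1) by (cases p rule: rev_cases) auto
    moreover have "distinct (tl p @ q)" using that(1) by (cases p) auto
    ultimately have "mould_lin A (shuffle (butlast p) q) = 0" "mould_lin A (shuffle (tl p) q) = 0"
      using less.hyps[of "butlast p" q] less.hyps[of "tl p" q] False that(2-4) by (cases p; simp)+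
    then show ?thesis by simp
  qed
  have "mould_lin A (shuffle u v) = mould_lin (\<lambda>w. A (butlast w) - A (tl w)) (shuffle u v)"
  proof (rule mould_lin_cong, rule rec)
    fix w assume w: "w \<in> set (shuffle u v)"
    show "distinct w" using distinct_shuffle_word_iff[OF w] less.prems(1) by simp
    show "length w \<ge> 2" using length_shuffle_word[OF w] less.prems(2,3) by (cases u; cases v) auto
  qed
  also have "\<dots> = (mould_lin A (shuffle (butlast u) v) + mould_lin A (shuffle u (butlast v))) -
      (mould_lin A (shuffle (tl u) v) + mould_lin A (shuffle u (tl v)))"
    by (simp add: mould_lin_diff mould_lin_tl_shuffle mould_lin_butlast_shuffle less.prems)
  also have "mould_lin A (shuffle u (butlast v)) = mould_lin A (shuffle u (tl v))"
    unfolding mould_lin_shuffle_commute[of A u]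
    by (rule butlast_tl_left) (use less.prems in auto)
  finally show ?case using butlast_tl_left[of u v] less.prems by simp
qed

theorem lemma1p29:
  fixes A :: "'v list \<Rightarrow> 'r::ab_group_add"
  assumes "A [] = 0"
    and "\<And>w. distinct w \<Longrightarrow> length w \<ge> 2 \<Longrightarrow> A w = A (butlast w) - A (tl w)"
  shows "alternal A"
  unfolding alternal_def using assms mould_lin_shuffle_eq_0 by blast

end
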